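(* Let $\lambda>0$, let $\Gamma$ be a bipartite metric graph, and let $f:\Gamma\to\Gamma$ be a graph map that preserves the bipartite structure, does not collapse any edge, and is uniformly $\lambda$-expanding. Then the split map $S(f):S(\Gamma)\to S(\Gamma)$ is uniformly $\lambda$-expanding.
   Context: A graph map sends vertices to vertices and each edge to an edge path (backtracking allowed). A metric graph has positive edge lengths; the length of an edge path is the sum of edge lengths with multiplicity, and $f$ is uniformly $\lambda$-expanding if each edge's image has $\lambda$ times the edge's length. Let $\Gamma$ have vertex parts $V_0,V_1$ and edges $x_1,x_2,\dots$, each oriented from its $V_0$-endpoint to its $V_1$-endpoint; "preserves the bipartite structure" means $f(V_0)\subset V_0$, $f(V_1)\subset V_1$, so each $f(x_i)$ is an edge path of odd combinatorial length $\|f(x_i)\|$ (number of edges). Prototype graph and maps: $P_7$ has vertices $v_0,v_1$ and edges $a,\dots,g$ oriented $v_0\to v_1$ (uppercase = reversed); $\phi_1=\mathrm{id}$ and, for $m\ge0$, $\phi_{3+2m}$: $a\mapsto aG(aB)^ma$, $b\mapsto bD(bC)^mb$, $c\mapsto cF(cA)^mc$, $d\mapsto aB(aB)^ma$, $e\mapsto cB(aB)^ma$, $f\mapsto aC(aB)^ma$, $g\mapsto bE(bA)^mb$. The split graph $S(\Gamma)$ is obtained by replacing each edge $x_i$ (from $u\in V_0$ to $w\in V_1$) by seven edges $a_i,\dots,g_i$ from $u$ to $w$, each of the same length as $x_i$. The split map $S(f)$ sends the edge $y_i$ ($y\in\{a,\dots,g\}$) to the edge path obtained from the word $\phi_{\|f(x_i)\|}(y)$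 by giving its $t$-th letter the subscript of the $t$-th edge of the path $f(x_i)$ (keeping the letter and its case). *)

theory Defs
  imports Main "HOL.Real"
begin

text \<open>Oriented edges: a pair (e, r) where r = True means e is traversed
  backwards (uppercase letter).  An edge path is a list of oriented edges.\<close>

type_synonym 'e epath = "('e \<times> bool) list"

definition ostart :: "('e \<Rightarrow> 'v) \<Rightarrow> ('e \<Rightarrow> 'v) \<Rightarrow> 'e \<times> bool \<Rightarrow> 'v" where
  "ostart src tgt x = (if snd x then tgt (fst x) else src (fst x))"

definition oend :: "('e \<Rightarrow> 'v) \<Rightarrow> ('e \<Rightarrow> 'v) \<Rightarrow> 'e \<times> bool \<Rightarrow> 'v" where
  "oend src tgt x = (if snd x then src (fst x) else tgt (fst x))"

fun is_edge_path :: "'e set \<Rightarrow> ('e \<Rightarrow> 'v) \<Rightarrow> ('e \<Rightarrow> 'v) \<Rightarrow> 'e epath \<Rightarrow> 'v \<Rightarrow> 'v \<Rightarrow> bool" where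
  "is_edge_path E src tgt [] u w = (u = w)"
| "is_edge_path E src tgt (x # p) u w =
     (fst x \<in> E \<and> ostart src tgt x = u \<and> is_edge_path E src tgt p (oend src tgt x) w)"

definition path_length :: "('e \<Rightarrow> real) \<Rightarrow> 'e epath \<Rightarrow> real" where
  "path_length len p = (\<Sum>x\<leftarrow>p. len (fst x))"

definition bipartite_metric_graph ::
  "'v set \<Rightarrow> 'v set \<Rightarrow> 'e set \<Rightarrow> ('e \<Rightarrow> 'v) \<Rightarrow> ('e \<Rightarrow> 'v) \<Rightarrow> ('e \<Rightarrow> real) \<Rightarrow> bool" where
  "bipartite_metric_graph V0 V1 E src tgt len \<longleftrightarrow>
     finite V0 \<and> finite V1 \<and> finite E \<and> V0 \<inter> V1 = {} \<and>
     (\<forall>e\<in>E. src e \<in> V0 \<and> tgt e \<in> V1 \<and> len e > 0)"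

definition graph_map ::
  "'v set \<Rightarrow> 'e set \<Rightarrow> ('e \<Rightarrow> 'v) \<Rightarrow> ('e \<Rightarrow> 'v) \<Rightarrow> ('v \<Rightarrow> 'v) \<Rightarrow> ('e \<Rightarrow> 'e epath) \<Rightarrow> bool" where
  "graph_map V E src tgt fv fe \<longleftrightarrow>
     fv ` V \<subseteq> V \<and> (\<forall>e\<in>E. is_edge_path E src tgt (fe e) (fv (src e)) (fv (tgt e)))"

definition preserves_bipartite :: "'v set \<Rightarrow> 'v set \<Rightarrow> ('v \<Rightarrow> 'v) \<Rightarrow> bool" where
  "preserves_bipartite V0 V1 fv \<longleftrightarrow> fv ` V0 \<subseteq> V0 \<and> fv ` V1 \<subseteq> V1"

definition no_collapse :: "'e set \<Rightarrow> ('e \<Rightarrow> 'e epath) \<Rightarrow> bool" where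
  "no_collapse E fe \<longleftrightarrow> (\<forall>e\<in>E. fe e \<noteq> [])"

definition uniformly_expanding :: "'e set \<Rightarrow> ('e \<Rightarrow> real) \<Rightarrow> ('e \<Rightarrow> 'e epath) \<Rightarrow> real \<Rightarrow> bool" where
  "uniformly_expanding E len fe lam \<longleftrightarrow> (\<forall>e\<in>E. path_length len (fe e) = lam * len e)"

text \<open>The seven letters a,...,g of the prototype graph P_7.\<close>
datatype letter = La | Lb | Lc | Ld | Le | Lf | Lg

definition phi_word :: "letter \<Rightarrow> letter \<Rightarrow> letter \<Rightarrow> letter \<Rightarrow> letter \<Rightarrow> nat \<Rightarrow> letter epath" where
  "phi_word x1 x2 r1 r2 x3 m =
     [(x1, False), (x2, True)] @ concat (replicate m [(r1, False), (r2, True)]) @ [(x3, False)]"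

text \<open>The prototype maps phi_n: phi_1 = id, phi_(3+2m) as in the paper
  (only odd n are relevant).\<close>
definition phi :: "nat \<Rightarrow> letter \<Rightarrow> letter epath" where
  "phi n y = (if n = 1 then [(y, False)] else
     (let m = (n - 3) div 2 in
      (case y of
         La \<Rightarrow> phi_word La Lg La Lb La m
       | Lb \<Rightarrow> phi_word Lb Ld Lb Lc Lb m
       | Lc \<Rightarrow> phi_word Lc Lf Lc La Lc m
       | Ld \<Rightarrow> phi_word La Lb La Lb La m
       | Le \<Rightarrow> phi_word Lc Lb La Lb La m
       | Lf \<Rightarrow> phi_word La Lc La Lb La m
       | Lg \<Rightarrow> phi_word Lb Le Lb La Lb m)))"

definition split_edges :: "'e set \<Rightarrow> ('e \<times> letter) set" where
  "split_edges E = E \<times> UNIV"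

definition split_src :: "('e \<Rightarrow> 'v) \<Rightarrow> 'e \<times> letter \<Rightarrow> 'v" where
  "split_src src x = src (fst x)"

definition split_tgt :: "('e \<Rightarrow> 'v) \<Rightarrow> 'e \<times> letter \<Rightarrow> 'v" where
  "split_tgt tgt x = tgt (fst x)"

definition split_len :: "('e \<Rightarrow> real) \<Rightarrow> 'e \<times> letter \<Rightarrow> real" where
  "split_len len x = len (fst x)"

text \<open>Split map S(f) on edges: the t-th letter of phi_{||f(x_i)||}(y) (with its
  case) gets the subscript of the t-th edge of f(x_i).  On vertices S(f) = f.\<close>
definition split_map_edges :: "('e \<Rightarrow> 'e epath) \<Rightarrow> 'e \<times> letter \<Rightarrow> ('e \<times> letter) epath" where
  "split_map_edges fe x =
     map2 (\<lambda>l d. ((fst d, fst l), snd l)) (phi (length (fe (fst x))) (snd x)) (fe (fst x))"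

end

theory Submission
  imports Defs
begin

text \<open>Since f respects the bipartition and every edge runs from V0 to V1, each image path
  f(x) has odd combinatorial length n, and the prototype word phi_n(y) has exactly n letters.
  Hence S(f)(y_x) is f(x) with every edge replaced by a parallel copy of the same length, so
  it has the same metric length lam * len x.\<close>

lemma edge_path_parity:
  assumes edges: "\<And>e. e \<in> E \<Longrightarrow> src e \<in> V0 \<and> tgt e \<in> V1"
    and disjoint: "V0 \<inter> V1 = {}"
    and path: "is_edge_path E src tgt p u w"
    and start: "u \<in> V0 \<union> V1"
  shows "w \<in> V0 \<longleftrightarrow> (u \<in> V0 \<longleftrightarrow> even (length p))"
  using path start
proof (induction p arbitrary: u)
  case Nil
  then show ?case by simp
next
  case (Cons x p)
  let ?v = "oend src tgt x"
  have x: "fst x \<in> E" "ostart src tgt x = u" and rest: "is_edge_path E src tgt p ?v w"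
    using Cons.prems(1) by auto
  have crosses: "?v \<in> V0 \<union> V1" "u \<in> V0 \<longleftrightarrow> ?v \<notin> V0"
    using edges[OF x(1)] disjoint x(2) by (auto simp: ostart_def oend_def)
  show ?case
    using Cons.IH[OF rest crosses(1)] crosses(2) by simp
qed

lemma odd_length_edge_path_V0_V1:
  assumes "\<And>e. e \<in> E \<Longrightarrow> src e \<in> V0 \<and> tgt e \<in> V1" "V0 \<inter> V1 = {}"
    and "is_edge_path E src tgt p u w" "u \<in> V0" "w \<in> V1"
  shows "odd (length p)"
  using edge_path_parity[OF assms(1-3)] assms(2,4,5) by auto

lemma odd_length_image_edge:
  assumes "bipartite_metric_graph V0 V1 E src tgt len"
    and "graph_map (V0 \<union> V1) E src tgt fv fe"
    and "preserves_bipartite V0 V1 fv"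
    and "e \<in> E"
  shows "odd (length (fe e))"
proof (rule odd_length_edge_path_V0_V1)
  show "\<And>e. e \<in> E \<Longrightarrow> src e \<in> V0 \<and> tgt e \<in> V1" "V0 \<inter> V1 = {}"
    using assms(1) by (auto simp: bipartite_metric_graph_def)
  show "is_edge_path E src tgt (fe e) (fv (src e)) (fv (tgt e))"
    using assms(2,4) by (simp add: graph_map_def)
  show "fv (src e) \<in> V0" "fv (tgt e) \<in> V1"
    using assms by (auto simp: bipartite_metric_graph_def preserves_bipartite_def)
qed

lemma length_phi_word: "length (phi_word x1 x2 r1 r2 x3 m) = 3 + 2 * m"
  by (induction m) (auto simp: phi_word_def)

lemma length_phi:
  assumes "odd n"
  shows "length (phi n y) = n"
proof (cases "n = 1")
  case True
  then show ?thesis by (simp add: phi_def)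
next
  case False
  with assms have "3 + 2 * ((n - 3) div 2) = n" by presburger
  with False show ?thesis
    by (cases y) (simp_all add: phi_def Let_def length_phi_word)
qed

lemma path_length_relabel:
  assumes "length ws = length p"
  shows "path_length (split_len len) (map2 (\<lambda>l d. ((fst d, fst l), snd l)) ws p)
           = path_length len p"
  using assms
  by (induction ws p rule: list_induct2) (simp_all add: path_length_def split_len_def)

lemma path_length_split_map_edges:
  assumes "odd (length (fe e))"
  shows "path_length (split_len len) (split_map_edges fe (e, y)) = path_length len (fe e)"
  unfolding split_map_edges_def
  using path_length_relabel[OF length_phi[OF assms]] by simp

theorem mainTheorem5:
  fixes V0 V1 :: "'v set" and E :: "'e set" and src tgt :: "'e \<Rightarrow> 'v"
    and len :: "'e \<Rightarrow> real" and fv :: "'v \<Rightarrow> 'v" and fe :: "'e \<Rightarrow> 'e epath"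
    and lam :: real
  assumes "lam > 0"
    and "bipartite_metric_graph V0 V1 E src tgt len"
    and "graph_map (V0 \<union> V1) E src tgt fv fe"
    and "preserves_bipartite V0 V1 fv"
    and "no_collapse E fe"
    and "uniformly_expanding E len fe lam"
  shows "uniformly_expanding (split_edges E) (split_len len) (split_map_edges fe) lam"
  unfolding uniformly_expanding_def split_edges_def
proof (clarify)
  fix e y
  assume "e \<in> E"
  have "path_length (split_len len) (split_map_edges fe (e, y)) = path_length len (fe e)"
    using odd_length_image_edge[OF assms(2-4) \<open>e \<in> E\<close>] by (rule path_length_split_map_edges)
  also have "\<dots> = lam * len e"
    using assms(6) \<open>e \<in> E\<close> by (simp add: uniformly_expanding_def)
  finally show "path_length (split_len len) (split_map_edges fe (e, y)) = lam * split_len len (e, y)"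
    by (simp add: split_len_def)
qed

end
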